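(* Let $a_1,a_2,a_3,a_4>0$ satisfy $4a_2a_4>(a_1+a_3)^2$, let $z_0>0$, set $y_0=z_0a_1/a_2$ and $\beta=\frac12\sqrt{4a_2a_4-(a_1+a_3)^2}\in\mathbb{R}$. For $y'\in[0,y_0)$ let $\tau\mapsto(z(\tau,y'),y(\tau,y'))$ be the solution of $\dot z=a_1z-a_2y$, $\dot y=a_4z-a_3y$ with $(z(0),y(0))=(z_0,y')$, explicitly $$z(\tau,y')=e^{\frac{a_1-a_3}{2}\tau}\Big(z_0\cos\beta\tau+\Big(z_0\frac{a_1+a_3}{2\beta}-\frac{y'a_2}{\beta}\Big)\sin\beta\tau\Big),$$ $$y(\tau,y')=e^{\frac{a_1-a_3}{2}\tau}\Big(y'\cos\beta\tau+\Big(\frac{a_4z_0}{\beta}-y'\frac{a_1+a_3}{2\beta}\Big)\sin\beta\tau\Big).$$ Then for each $y'\in[0,y_0)$ there exist a unique $y^+=y^+(y')>y_0$ and a minimal $\tau_1=\tau_1(y')>0$ such that $z(\tau_1,y')=z_0$ and $y(\tau_1,y')=y^+$ (i.e. $\tau_1$ is the first positive time at which the trajectory from $(z_0,y')$ reaches the half-line $\{(z_0,y):y>y_0\}$). Moreover, $\tau_1$ does not depend on $z_0$: writing $y'=\alpha y_0$ with $\alpha$ fixed, $\tau_1$ is determined by $a_1,\dots,a_4,\alpha$ alone.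
   Context: This describes the within-host dynamics of an infected host with viral load $z\ge z_0$ ($z_0$ the minimum detectable viral load) and antibody level $y\ge0$. The time $\tau_1(y')$ is interpreted as the time an infected individual entering the infected compartment with antibody level $y'$ remains infected before transitioning to the recovered compartment. *)

theory Defs
  imports Complex_Main
begin

definition beta :: "real \<Rightarrow> real \<Rightarrow> real \<Rightarrow> real \<Rightarrow> real" where
  "beta a1 a2 a3 a4 = sqrt (4 * a2 * a4 - (a1 + a3)^2) / 2"

definition yzero :: "real \<Rightarrow> real \<Rightarrow> real \<Rightarrow> real" where
  "yzero a1 a2 z0 = z0 * a1 / a2"

text \<open>Explicit solution of z' = a1 z - a2 y, y' = a4 z - a3 y with (z(0), y(0)) = (z0, yp).\<close>
definition zsol :: "real \<Rightarrow> real \<Rightarrow> real \<Rightarrow> real \<Rightarrow> real \<Rightarrow> real \<Rightarrow> real \<Rightarrow> real" where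
  "zsol a1 a2 a3 a4 z0 yp t =
     exp ((a1 - a3) / 2 * t) *
       (z0 * cos (beta a1 a2 a3 a4 * t)
        + (z0 * (a1 + a3) / (2 * beta a1 a2 a3 a4) - yp * a2 / beta a1 a2 a3 a4)
          * sin (beta a1 a2 a3 a4 * t))"

definition ysol :: "real \<Rightarrow> real \<Rightarrow> real \<Rightarrow> real \<Rightarrow> real \<Rightarrow> real \<Rightarrow> real \<Rightarrow> real" where
  "ysol a1 a2 a3 a4 z0 yp t =
     exp ((a1 - a3) / 2 * t) *
       (yp * cos (beta a1 a2 a3 a4 * t)
        + (a4 * z0 / beta a1 a2 a3 a4 - yp * (a1 + a3) / (2 * beta a1 a2 a3 a4))
          * sin (beta a1 a2 a3 a4 * t))"

definition on_halfline :: "real \<Rightarrow> real \<Rightarrow> real \<Rightarrow> real \<Rightarrow> real \<Rightarrow> real \<Rightarrow> real \<Rightarrow> bool" where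
  "on_halfline a1 a2 a3 a4 z0 yp t \<longleftrightarrow>
     zsol a1 a2 a3 a4 z0 yp t = z0 \<and> ysol a1 a2 a3 a4 z0 yp t > yzero a1 a2 z0"

definition first_hit :: "real \<Rightarrow> real \<Rightarrow> real \<Rightarrow> real \<Rightarrow> real \<Rightarrow> real \<Rightarrow> real \<Rightarrow> bool" where
  "first_hit a1 a2 a3 a4 z0 yp t \<longleftrightarrow>
     t > 0 \<and> on_halfline a1 a2 a3 a4 z0 yp t \<and>
     (\<forall>s. 0 < s \<and> s < t \<longrightarrow> \<not> on_halfline a1 a2 a3 a4 z0 yp s)"

end

theory Submission
  imports Defs "HOL-Analysis.Analysis"
begin

(* Starting from (z0, y') with y' < y0 we have z' = a1 z0 - a2 y' > 0, while at the half period
   pi / beta the solution is z = - z0 e^((a1 - a3) pi / (2 beta)) < z0. Hence there is a first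
   return time t to the level z0, and z > z0 on (0, t). Approaching its value from above, z must
   have z'(t) = a1 z0 - a2 y(t) <= 0, i.e. y(t) >= y0; and y(t) = y0 is excluded because then
   z'(t) = 0 and z''(t) = - a2 (a4 z0 - a3 y0) = - (a2 a4 - a1 a3) z0 < 0.
   The system is linear, so the trajectory from (k z0, k y') is k times the one from (z0, y'):
   the first hitting time depends on y' only through y' / y0. *)

lemma beta_pos:
  assumes "(a1 + a3)^2 < 4 * a2 * a4"
  shows "beta a1 a2 a3 a4 > 0"
  using assms by (simp add: beta_def)

lemma beta_squared:
  assumes "(a1 + a3)^2 < 4 * a2 * a4"
  shows "(beta a1 a2 a3 a4)^2 = a2 * a4 - ((a1 + a3) / 2)^2"
  using assms by (simp add: beta_def power_divide)

lemma damped_oscillation_has_real_derivative: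
  "((\<lambda>t. exp (c * t) * (P * cos (b * t) + Q * sin (b * t))) has_real_derivative
      exp (c * t) * ((c * P + b * Q) * cos (b * t) + (c * Q - b * P) * sin (b * t))) (at t)"
  by (rule derivative_eq_intros refl | simp)+ (simp add: algebra_simps)

text \<open>K and L are the sine coefficients of \<^const>\<open>zsol\<close> and \<^const>\<open>ysol\<close>; the identities match
  the coefficients of their derivatives with those of the right-hand side of the system.\<close>

lemma solution_coefficients:
  fixes a1 a2 a3 a4 b z y :: real
  assumes "b \<noteq> 0" "b^2 = a2 * a4 - ((a1 + a3) / 2)^2"
  defines "K \<equiv> z * (a1 + a3) / (2 * b) - y * a2 / b"
    and "L \<equiv> a4 * z / b - y * (a1 + a3) / (2 * b)"
  shows "(a1 - a3) / 2 * z + b * K = a1 * z - a2 * y"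
    and "(a1 - a3) / 2 * K - b * z = a1 * K - a2 * L"
    and "(a1 - a3) / 2 * y + b * L = a4 * z - a3 * y"
    and "(a1 - a3) / 2 * L - b * y = a4 * K - a3 * L"
  using assms(1,2) unfolding K_def L_def by (simp_all add: field_simps power2_eq_square; algebra)+

lemma zsol_has_real_derivative:
  assumes "(a1 + a3)^2 < 4 * a2 * a4"
  shows "(zsol a1 a2 a3 a4 z0 yp has_real_derivative
            a1 * zsol a1 a2 a3 a4 z0 yp t - a2 * ysol a1 a2 a3 a4 z0 yp t) (at t)"
proof -
  define b where "b = beta a1 a2 a3 a4"
  define K where "K = z0 * (a1 + a3) / (2 * b) - yp * a2 / b"
  define L where "L = a4 * z0 / b - yp * (a1 + a3) / (2 * b)"
  have b: "b \<noteq> 0" "b^2 = a2 * a4 - ((a1 + a3) / 2)^2"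
    using beta_pos[OF assms] beta_squared[OF assms] by (auto simp: b_def)
  note coefficients = solution_coefficients[OF b, where z = z0 and y = yp, folded K_def L_def]
  have "((\<lambda>t. exp ((a1 - a3) / 2 * t) * (z0 * cos (b * t) + K * sin (b * t)))
      has_real_derivative
      exp ((a1 - a3) / 2 * t) * ((a1 * z0 - a2 * yp) * cos (b * t) + (a1 * K - a2 * L) * sin (b * t))) (at t)"
    using damped_oscillation_has_real_derivative[of "(a1 - a3) / 2" z0 b K t]
    by (simp only: coefficients(1) coefficients(2))
  then show ?thesis
    unfolding zsol_def ysol_def b_def[symmetric] K_def[symmetric] L_def[symmetric]
    by (simp add: algebra_simps)
qed

lemma ysol_has_real_derivative:
  assumes "(a1 + a3)^2 < 4 * a2 * a4"
  shows "(ysol a1 a2 a3 a4 z0 yp has_real_derivative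
            a4 * zsol a1 a2 a3 a4 z0 yp t - a3 * ysol a1 a2 a3 a4 z0 yp t) (at t)"
proof -
  define b where "b = beta a1 a2 a3 a4"
  define K where "K = z0 * (a1 + a3) / (2 * b) - yp * a2 / b"
  define L where "L = a4 * z0 / b - yp * (a1 + a3) / (2 * b)"
  have b: "b \<noteq> 0" "b^2 = a2 * a4 - ((a1 + a3) / 2)^2"
    using beta_pos[OF assms] beta_squared[OF assms] by (auto simp: b_def)
  note coefficients = solution_coefficients[OF b, where z = z0 and y = yp, folded K_def L_def]
  have "((\<lambda>t. exp ((a1 - a3) / 2 * t) * (yp * cos (b * t) + L * sin (b * t)))
      has_real_derivative
      exp ((a1 - a3) / 2 * t) * ((a4 * z0 - a3 * yp) * cos (b * t) + (a4 * K - a3 * L) * sin (b * t))) (at t)"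
    using damped_oscillation_has_real_derivative[of "(a1 - a3) / 2" yp b L t]
    by (simp only: coefficients(3) coefficients(4))
  then show ?thesis
    unfolding zsol_def ysol_def b_def[symmetric] K_def[symmetric] L_def[symmetric]
    by (simp add: algebra_simps)
qed

lemma first_return_exists:
  fixes f :: "real \<Rightarrow> real"
  assumes cont: "continuous_on {0..T} f" and "0 < T" "f T < c"
    and above: "\<forall>\<^sub>F s in at_right 0. c < f s"
  shows "\<exists>t. 0 < t \<and> f t = c \<and> (\<forall>s. 0 < s \<and> s < t \<longrightarrow> c < f s)"
proof -
  obtain d where "0 < d" and d: "\<And>s. 0 < s \<Longrightarrow> s < d \<Longrightarrow> c < f s"
    using above by (auto simp: eventually_at_right_field)
  define e where "e = min d T / 2"
  have e: "0 < e" "e < d" "e < T"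
    using \<open>0 < d\<close> \<open>0 < T\<close> by (auto simp: e_def)
  define S where "S = {t \<in> {e..T}. f t \<le> c}"
  have "T \<in> S"
    using e \<open>f T < c\<close> by (simp add: S_def)
  moreover have "closed S"
    unfolding S_def
    by (intro continuous_on_closed_Collect_le continuous_on_subset[OF cont] continuous_on_const)
      (use e in auto)
  moreover have "bdd_below S"
    by (auto simp: S_def intro: bdd_belowI[of _ e])
  ultimately have "Inf S \<in> S"
    using closed_contains_Inf by blast
  then have t: "e \<le> Inf S" "Inf S \<le> T" "f (Inf S) \<le> c"
    by (simp_all add: S_def)
  have below_Inf: "c < f s" if "0 < s" "s < Inf S" for s
  proof (cases "s < e")
    case True
    then show ?thesis using d \<open>0 < s\<close> e by simp
  next
    case False
    then have "s \<notin> S"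
      using \<open>s < Inf S\<close> \<open>bdd_below S\<close> cInf_lower not_le by blast
    then show ?thesis using False \<open>s < Inf S\<close> t by (auto simp: S_def)
  qed
  obtain x where x: "e \<le> x" "x \<le> Inf S" "f x = c"
    using IVT2'[of f "Inf S" c e] t d[of e] e continuous_on_subset[OF cont] by auto
  then have "x = Inf S"
    using below_Inf[of x] e by fastforce
  then show ?thesis
    using x e below_Inf by (intro exI[of _ "Inf S"]) auto
qed

lemma DERIV_nonpos_at_left_minimum:
  fixes f :: "real \<Rightarrow> real"
  assumes "(f has_real_derivative D) (at x)" and "\<forall>\<^sub>F s in at_left x. f x \<le> f s"
  shows "D \<le> 0"
proof (rule ccontr)
  assume "\<not> D \<le> 0"
  then obtain d where "0 < d" and d: "\<And>h. 0 < h \<Longrightarrow> h < d \<Longrightarrow> f (x - h) < f x"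
    using DERIV_pos_inc_left[OF assms(1)] by auto
  have "\<forall>\<^sub>F s in at_left x. f s < f x"
    unfolding eventually_at_left_field
    using \<open>0 < d\<close> d[of "x - _"] by (intro exI[of _ "x - d"]) auto
  with assms(2) have "\<forall>\<^sub>F s in at_left x. False"
    by eventually_elim simp
  then show False
    by simp
qed

lemma DERIV_second_nonneg_at_left_minimum:
  fixes f :: "real \<Rightarrow> real"
  assumes f': "\<And>s. (f has_real_derivative f' s) (at s)"
    and "f' x = 0" and "(f' has_real_derivative D) (at x)"
    and "\<forall>\<^sub>F s in at_left x. f x \<le> f s"
  shows "0 \<le> D"
proof (rule ccontr)
  assume "\<not> 0 \<le> D"
  then obtain d where "0 < d" and d: "\<And>h. 0 < h \<Longrightarrow> h < d \<Longrightarrow> 0 < f' (x - h)"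
    using DERIV_neg_dec_left[OF assms(3)] \<open>f' x = 0\<close> by auto
  have "f s < f x" if "x - d < s" "s < x" for s
  proof (rule DERIV_pos_imp_increasing_open[OF \<open>s < x\<close>])
    fix r assume "s < r" "r < x"
    then show "\<exists>y. (f has_real_derivative y) (at r) \<and> 0 < y"
      using f' d[of "x - r"] that by auto
  next
    show "continuous_on {s..x} f"
      using f' by (meson DERIV_isCont continuous_at_imp_continuous_on)
  qed
  then have "\<forall>\<^sub>F s in at_left x. f s < f x"
    unfolding eventually_at_left_field
    using \<open>0 < d\<close> by (intro exI[of _ "x - d"]) auto
  with assms(4) have "\<forall>\<^sub>F s in at_left x. False"
    by eventually_elim simp
  then show False
    by simp
qed

lemma zsol_half_period:
  assumes "(a1 + a3)^2 < 4 * a2 * a4"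
  shows "zsol a1 a2 a3 a4 z0 yp (pi / beta a1 a2 a3 a4)
           = - (z0 * exp ((a1 - a3) / 2 * (pi / beta a1 a2 a3 a4)))"
  using beta_pos[OF assms] by (simp add: zsol_def)

lemma zsol_first_return_exists:
  assumes "a2 > 0" and disc: "(a1 + a3)^2 < 4 * a2 * a4"
    and "z0 > 0" and "yp < yzero a1 a2 z0"
  shows "\<exists>t. 0 < t \<and> zsol a1 a2 a3 a4 z0 yp t = z0 \<and>
           (\<forall>s. 0 < s \<and> s < t \<longrightarrow> z0 < zsol a1 a2 a3 a4 z0 yp s)"
proof -
  define Z where "Z = zsol a1 a2 a3 a4 z0 yp"
  have Z': "\<And>t. (Z has_real_derivative
      a1 * Z t - a2 * ysol a1 a2 a3 a4 z0 yp t) (at t)"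
    unfolding Z_def by (rule zsol_has_real_derivative[OF disc])
  have "a2 * yp < a1 * z0"
    using mult_strict_left_mono[OF \<open>yp < yzero a1 a2 z0\<close> \<open>a2 > 0\<close>] \<open>a2 > 0\<close>
    by (simp add: yzero_def mult.commute)
  then have "0 < a1 * Z 0 - a2 * ysol a1 a2 a3 a4 z0 yp 0"
    by (simp add: Z_def zsol_def ysol_def)
  then obtain d where "0 < d" and d: "\<And>h. 0 < h \<Longrightarrow> h < d \<Longrightarrow> Z 0 < Z (0 + h)"
    using DERIV_pos_inc_right[OF Z'] by blast
  then have "\<forall>\<^sub>F s in at_right 0. z0 < Z s"
    unfolding eventually_at_right_field by (auto simp: Z_def zsol_def intro!: exI[of _ d])
  moreover have "Z (pi / beta a1 a2 a3 a4) < z0"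
  proof -
    have "0 < z0 * exp ((a1 - a3) / 2 * (pi / beta a1 a2 a3 a4))"
      using \<open>z0 > 0\<close> by simp
    then show ?thesis
      unfolding Z_def zsol_half_period[OF disc] using \<open>z0 > 0\<close> by linarith
  qed
  moreover have "continuous_on {0..pi / beta a1 a2 a3 a4} Z"
    using Z' by (meson DERIV_isCont continuous_at_imp_continuous_on)
  ultimately show ?thesis
    unfolding Z_def using first_return_exists beta_pos[OF disc] by force
qed

lemma ysol_above_yzero_at_first_return:
  assumes "a2 > 0" and disc: "(a1 + a3)^2 < 4 * a2 * a4" and "z0 > 0"
    and "0 < t" "zsol a1 a2 a3 a4 z0 yp t = z0"
    and above: "\<And>s. 0 < s \<Longrightarrow> s < t \<Longrightarrow> z0 < zsol a1 a2 a3 a4 z0 yp s"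
  shows "yzero a1 a2 z0 < ysol a1 a2 a3 a4 z0 yp t"
proof -
  define Z where "Z = zsol a1 a2 a3 a4 z0 yp"
  define Y where "Y = ysol a1 a2 a3 a4 z0 yp"
  define y0 where "y0 = yzero a1 a2 z0"
  have y0: "a2 * y0 = a1 * z0"
    using \<open>a2 > 0\<close> by (simp add: y0_def yzero_def)
  have Zt: "Z t = z0"
    using assms(5) by (simp add: Z_def)
  have Z': "\<And>t. (Z has_real_derivative a1 * Z t - a2 * Y t) (at t)"
    unfolding Z_def Y_def by (rule zsol_has_real_derivative[OF disc])
  have Y': "\<And>t. (Y has_real_derivative a4 * Z t - a3 * Y t) (at t)"
    unfolding Z_def Y_def by (rule ysol_has_real_derivative[OF disc])
  have left_min: "\<forall>\<^sub>F s in at_left t. Z t \<le> Z s"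
    unfolding eventually_at_left_field
    using \<open>0 < t\<close> Zt above by (intro exI[of _ 0]) (auto simp: Z_def intro: less_imp_le)
  have "a1 * Z t - a2 * Y t \<le> 0"
    using DERIV_nonpos_at_left_minimum[OF Z' left_min] .
  then have "y0 \<le> Y t"
    using Zt y0 \<open>a2 > 0\<close> by (metis diff_le_0_iff_le mult_le_cancel_left_pos)
  moreover have "Y t \<noteq> y0"
  proof
    assume "Y t = y0"
    have Z'': "((\<lambda>s. a1 * Z s - a2 * Y s) has_real_derivative
        a1 * (a1 * Z t - a2 * Y t) - a2 * (a4 * Z t - a3 * Y t)) (at t)"
      by (intro DERIV_diff DERIV_cmult Z' Y')
    have "0 \<le> a1 * (a1 * Z t - a2 * Y t) - a2 * (a4 * Z t - a3 * Y t)"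
      using \<open>Y t = y0\<close> Zt y0 by (intro DERIV_second_nonneg_at_left_minimum[OF Z' _ Z'' left_min]) simp
    also have "\<dots> = - ((a2 * a4 - a1 * a3) * z0)"
      unfolding \<open>Y t = y0\<close> Zt using y0 by algebra
    finally have "(a2 * a4 - a1 * a3) * z0 \<le> 0"
      by simp
    moreover have "(a1 + a3)^2 = (a1 - a3)^2 + 4 * a1 * a3"
      by (simp add: power2_eq_square algebra_simps)
    then have "a1 * a3 < a2 * a4"
      using disc zero_le_power2[of "a1 - a3"] by linarith
    ultimately show False
      using \<open>z0 > 0\<close> by (simp add: mult_le_0_iff)
  qed
  ultimately show ?thesis
    by (simp add: Y_def y0_def)
qed

lemma first_hit_exists:
  assumes "a2 > 0" and "(a1 + a3)^2 < 4 * a2 * a4"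
    and "z0 > 0" and "yp < yzero a1 a2 z0"
  shows "\<exists>t. first_hit a1 a2 a3 a4 z0 yp t"
proof -
  obtain t where "0 < t" "zsol a1 a2 a3 a4 z0 yp t = z0"
    and above: "\<And>s. 0 < s \<Longrightarrow> s < t \<Longrightarrow> z0 < zsol a1 a2 a3 a4 z0 yp s"
    using zsol_first_return_exists[OF assms] by blast
  moreover have "yzero a1 a2 z0 < ysol a1 a2 a3 a4 z0 yp t"
    using ysol_above_yzero_at_first_return[OF assms(1-3) calculation] .
  ultimately have "first_hit a1 a2 a3 a4 z0 yp t"
    unfolding first_hit_def on_halfline_def by (auto dest: above)
  then show ?thesis ..
qed

lemma first_hit_unique:
  assumes "first_hit a1 a2 a3 a4 z0 yp s" "first_hit a1 a2 a3 a4 z0 yp t"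
  shows "s = t"
  using assms unfolding first_hit_def by (metis linorder_neqE_linordered_idom)

lemma zsol_scale: "zsol a1 a2 a3 a4 (k * z0) (k * yp) t = k * zsol a1 a2 a3 a4 z0 yp t"
  by (simp add: zsol_def algebra_simps diff_divide_distrib)

lemma ysol_scale: "ysol a1 a2 a3 a4 (k * z0) (k * yp) t = k * ysol a1 a2 a3 a4 z0 yp t"
  by (simp add: ysol_def algebra_simps diff_divide_distrib)

lemma yzero_scale: "yzero a1 a2 (k * z0) = k * yzero a1 a2 z0"
  by (simp add: yzero_def)

lemma first_hit_scale:
  assumes "k > 0"
  shows "first_hit a1 a2 a3 a4 (k * z0) (k * yp) t \<longleftrightarrow> first_hit a1 a2 a3 a4 z0 yp t"
  using assms
  by (simp add: first_hit_def on_halfline_def zsol_scale ysol_scale yzero_scale)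

theorem proposition1:
  fixes a1 a2 a3 a4 z0 :: real
  assumes "a1 > 0" "a2 > 0" "a3 > 0" "a4 > 0"
    and "4 * a2 * a4 > (a1 + a3)^2"
    and "z0 > 0"
  shows "(\<forall>yp \<in> {0..<yzero a1 a2 z0}.
            (\<exists>!t. first_hit a1 a2 a3 a4 z0 yp t) \<and>
            (\<exists>!yplus. yplus > yzero a1 a2 z0 \<and>
                (\<exists>t. first_hit a1 a2 a3 a4 z0 yp t \<and> ysol a1 a2 a3 a4 z0 yp t = yplus))) \<and>
         (\<forall>\<alpha> \<in> {0..<1}. \<forall>z0'. z0' > 0 \<longrightarrow> (\<forall>t.
            first_hit a1 a2 a3 a4 z0 (\<alpha> * yzero a1 a2 z0) t \<longleftrightarrow>
            first_hit a1 a2 a3 a4 z0' (\<alpha> * yzero a1 a2 z0') t))"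
proof (intro conjI ballI allI impI)
  fix yp assume "yp \<in> {0..<yzero a1 a2 z0}"
  then obtain t where t: "first_hit a1 a2 a3 a4 z0 yp t"
    using first_hit_exists[OF assms(2,5,6)] by auto
  then show "\<exists>!t. first_hit a1 a2 a3 a4 z0 yp t"
    using first_hit_unique by blast
  have "ysol a1 a2 a3 a4 z0 yp t > yzero a1 a2 z0"
    using t by (simp add: first_hit_def on_halfline_def)
  then show "\<exists>!yplus. yplus > yzero a1 a2 z0 \<and>
      (\<exists>t. first_hit a1 a2 a3 a4 z0 yp t \<and> ysol a1 a2 a3 a4 z0 yp t = yplus)"
    using t first_hit_unique[OF t] by blast
next
  fix \<alpha> z0' t :: real
  assume "z0' > 0"
  define k where "k = z0' / z0"
  have "k > 0"
    using \<open>z0 > 0\<close> \<open>z0' > 0\<close> by (simp add: k_def)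
  have "z0' = k * z0" "\<alpha> * yzero a1 a2 z0' = k * (\<alpha> * yzero a1 a2 z0)"
    using \<open>z0 > 0\<close> by (simp_all add: k_def yzero_def)
  then show "first_hit a1 a2 a3 a4 z0 (\<alpha> * yzero a1 a2 z0) t \<longleftrightarrow>
      first_hit a1 a2 a3 a4 z0' (\<alpha> * yzero a1 a2 z0') t"
    using first_hit_scale[OF \<open>k > 0\<close>, of a1 a2 a3 a4 z0 "\<alpha> * yzero a1 a2 z0" t] by metis
qed

end
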